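(* Let $\lambda,\mu\in(0,1)$ with $\lambda+\mu>1$, and let $c:=(1-\mu)/\lambda$. Define $f_1:[0,c]\to[0,1]$, $f_1(x)=\lambda x+\mu$, and $f_2:[c,1]\to[0,1]$, $f_2(x)=\lambda x+\mu-1$. Then every map $f:[0,1]\to[0,1]$ such that $f|_{[0,c)}=f_1|_{[0,c)}$, $f|_{(c,1]}=f_2|_{(c,1]}$ and $c\notin f^k([f(1),f(0)])$ for all $k\in\mathbb{N}$, satisfies properties P1–P6 below with $N=2$, $c_0=0$, $c_1=c$, $c_2=1$, $X_1=[0,c)$, $X_2=(c,1]$.
   Context: For $N\geqslant 2$, points $c_0<c_1<\dots<c_N$, $X=[c_0,c_N]$, $X_1=[c_0,c_1)$, $X_i=(c_{i-1},c_i)$ for $1<i<N$, $X_N=(c_{N-1},c_N]$, and a map $f:X\to X$, define: $\Delta:=\{c_1,\dots,c_{N-1}\}$; $f_i$ the continuous extension of $f|_{X_i}$ to $\overline{X_i}$ (when it exists); $\widetilde X:=\bigcap_{n\geqslant0}f^{-n}(X\setminus\Delta)$. Atoms: $F_i(A):=\overline{f(A\cap X_i)}$, $A_{i_1\dots i_n}:=F_{i_n}\circ\dots\circ F_{i_1}(X)$ is an atom of generation $n$ if non-empty, $\mathcal{A}_n$ their set, $\mathcal{A}_n(x):=\{A\in\mathcal{A}_n:\exists t\in\mathbb{N},f^{t+n}(x)\in A\}$; attractor $\Lambda:=\bigcap_{n\geqslant1}\bigcup_{A\in\mathcal{A}_n}A$. $\Delta_{lr}(x)$ is the set of $c_i\in\Delta$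 such that for every $n\geqslant1$ there is $A\in\mathcal{A}_n(x)$ with $c_i\in A$, $f^{t+n}(x)\in A\cap X_i$ and $f^{t'+n}(x)\in A\cap X_{i+1}$ for some $t,t'\in\mathbb{N}$. P1: $f$ is a piecewise contracting map with contraction pieces $X_1,\dots,X_N$ (i.e. $f$ is discontinuous at every point of $\Delta$ and contracting with a constant $<1$ on each $X_i$), and $f|_{X_i}$ is affine with slope $\lambda\in(0,1)$ (the same for all $i$). P2: $f$ satisfies the separation property: each $f_i$ is injective and $f_i(\overline{X_i})\cap f_j(\overline{X_j})=\emptyset$ for $i\neq j$. P3: the attractor $\Lambda$ is a Cantor set. P4: $\bigcup_{i=1}^{N-1}\{f_i(c_i),f_{i+1}(c_i)\}\subset\widetilde X$. P5: there is $i\in\{1,\dots,N-1\}$ such that $\{f^n(f_i(c_i))\}_{n\in\mathbb{N}}$ or $\{f^n(f_{i+1}(c_i))\}_{n\in\mathbb{N}}$ is dense in $\Lambda$. P6: for every $x\in\widetilde X$ and $i\in\{1,\dots,N-1\}$, $c_i\in\Delta_{lr}(x)$. *)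

theory Defs
  imports "HOL-Analysis.Analysis"
begin

text \<open>General setting: N \<ge> 2 and points cs 0 < cs 1 < ... < cs N; X = [cs 0, cs N].\<close>

definition XX :: "nat \<Rightarrow> (nat \<Rightarrow> real) \<Rightarrow> real set" where
  "XX N cs = {cs 0 .. cs N}"

definition Xp :: "nat \<Rightarrow> (nat \<Rightarrow> real) \<Rightarrow> nat \<Rightarrow> real set" where
  "Xp N cs i = (if i = 1 then {cs 0 ..< cs 1}
                else if i = N then {cs (N - 1) <.. cs N}
                else {cs (i - 1) <..< cs i})"

definition Delta :: "nat \<Rightarrow> (nat \<Rightarrow> real) \<Rightarrow> real set" where
  "Delta N cs = cs ` {1 .. N - 1}"

text \<open>f_i: the continuous extension of f restricted to X_i to the closure of X_i
  (on X_i it is f, at boundary points it is the limit of f within X_i).\<close>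
definition fext :: "(real \<Rightarrow> real) \<Rightarrow> nat \<Rightarrow> (nat \<Rightarrow> real) \<Rightarrow> nat \<Rightarrow> real \<Rightarrow> real" where
  "fext f N cs i x = (if x \<in> Xp N cs i then f x else Lim (at x within Xp N cs i) f)"

definition Xtilde :: "(real \<Rightarrow> real) \<Rightarrow> nat \<Rightarrow> (nat \<Rightarrow> real) \<Rightarrow> real set" where
  "Xtilde f N cs = (\<Inter>n. {x \<in> XX N cs. (f ^^ n) x \<in> XX N cs - Delta N cs})"

definition Fop :: "(real \<Rightarrow> real) \<Rightarrow> nat \<Rightarrow> (nat \<Rightarrow> real) \<Rightarrow> nat \<Rightarrow> real set \<Rightarrow> real set" where
  "Fop f N cs i A = closure (f ` (A \<inter> Xp N cs i))"

definition atom :: "(real \<Rightarrow> real) \<Rightarrow> nat \<Rightarrow> (nat \<Rightarrow> real) \<Rightarrow> nat list \<Rightarrow> real set" where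
  "atom f N cs w = fold (Fop f N cs) w (XX N cs)"

definition atoms :: "(real \<Rightarrow> real) \<Rightarrow> nat \<Rightarrow> (nat \<Rightarrow> real) \<Rightarrow> nat \<Rightarrow> real set set" where
  "atoms f N cs n = {atom f N cs w | w. length w = n \<and> set w \<subseteq> {1..N} \<and> atom f N cs w \<noteq> {}}"

definition atoms_of :: "(real \<Rightarrow> real) \<Rightarrow> nat \<Rightarrow> (nat \<Rightarrow> real) \<Rightarrow> nat \<Rightarrow> real \<Rightarrow> real set set" where
  "atoms_of f N cs n x = {A \<in> atoms f N cs n. \<exists>t::nat. (f ^^ (t + n)) x \<in> A}"

definition attractor :: "(real \<Rightarrow> real) \<Rightarrow> nat \<Rightarrow> (nat \<Rightarrow> real) \<Rightarrow> real set" where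
  "attractor f N cs = (\<Inter>n\<in>{1..}. \<Union> (atoms f N cs n))"

definition Delta_lr :: "(real \<Rightarrow> real) \<Rightarrow> nat \<Rightarrow> (nat \<Rightarrow> real) \<Rightarrow> real \<Rightarrow> real set" where
  "Delta_lr f N cs x = {cs i | i. i \<in> {1 .. N - 1} \<and>
     (\<forall>n\<ge>1. \<exists>A \<in> atoms_of f N cs n x. cs i \<in> A \<and>
        (\<exists>t::nat. (f ^^ (t + n)) x \<in> A \<inter> Xp N cs i) \<and>
        (\<exists>t'::nat. (f ^^ (t' + n)) x \<in> A \<inter> Xp N cs (Suc i)))}"

definition cantor_set :: "real set \<Rightarrow> bool" where
  "cantor_set K \<longleftrightarrow> K \<noteq> {} \<and> compact K \<and> (\<forall>x\<in>K. x islimpt K) \<and>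
     (\<forall>x\<in>K. connected_component_set K x = {x})"

definition piecewise_contracting :: "(real \<Rightarrow> real) \<Rightarrow> nat \<Rightarrow> (nat \<Rightarrow> real) \<Rightarrow> bool" where
  "piecewise_contracting f N cs \<longleftrightarrow>
     (\<forall>i\<in>{1 .. N - 1}. \<not> continuous (at (cs i) within XX N cs) f) \<and>
     (\<exists>k::real. 0 \<le> k \<and> k < 1 \<and>
        (\<forall>i\<in>{1..N}. \<forall>x\<in>Xp N cs i. \<forall>y\<in>Xp N cs i. \<bar>f x - f y\<bar> \<le> k * \<bar>x - y\<bar>))"

definition P1 :: "(real \<Rightarrow> real) \<Rightarrow> nat \<Rightarrow> (nat \<Rightarrow> real) \<Rightarrow> bool" where
  "P1 f N cs \<longleftrightarrow> piecewise_contracting f N cs \<and>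
     (\<exists>lam::real. 0 < lam \<and> lam < 1 \<and>
        (\<forall>i\<in>{1..N}. \<exists>b::real. \<forall>x\<in>Xp N cs i. f x = lam * x + b))"

definition P2 :: "(real \<Rightarrow> real) \<Rightarrow> nat \<Rightarrow> (nat \<Rightarrow> real) \<Rightarrow> bool" where
  "P2 f N cs \<longleftrightarrow>
     (\<forall>i\<in>{1..N}. inj_on (fext f N cs i) (closure (Xp N cs i))) \<and>
     (\<forall>i\<in>{1..N}. \<forall>j\<in>{1..N}. i \<noteq> j \<longrightarrow>
        fext f N cs i ` closure (Xp N cs i) \<inter> fext f N cs j ` closure (Xp N cs j) = {})"

definition P3 :: "(real \<Rightarrow> real) \<Rightarrow> nat \<Rightarrow> (nat \<Rightarrow> real) \<Rightarrow> bool" where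
  "P3 f N cs \<longleftrightarrow> cantor_set (attractor f N cs)"

definition P4 :: "(real \<Rightarrow> real) \<Rightarrow> nat \<Rightarrow> (nat \<Rightarrow> real) \<Rightarrow> bool" where
  "P4 f N cs \<longleftrightarrow> (\<Union>i\<in>{1 .. N - 1}. {fext f N cs i (cs i), fext f N cs (Suc i) (cs i)})
     \<subseteq> Xtilde f N cs"

definition P5 :: "(real \<Rightarrow> real) \<Rightarrow> nat \<Rightarrow> (nat \<Rightarrow> real) \<Rightarrow> bool" where
  "P5 f N cs \<longleftrightarrow> (\<exists>i\<in>{1 .. N - 1}.
     attractor f N cs \<subseteq> closure (range (\<lambda>n. (f ^^ n) (fext f N cs i (cs i)))) \<or>
     attractor f N cs \<subseteq> closure (range (\<lambda>n. (f ^^ n) (fext f N cs (Suc i) (cs i)))))"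

definition P6 :: "(real \<Rightarrow> real) \<Rightarrow> nat \<Rightarrow> (nat \<Rightarrow> real) \<Rightarrow> bool" where
  "P6 f N cs \<longleftrightarrow> (\<forall>x\<in>Xtilde f N cs. \<forall>i\<in>{1 .. N - 1}. cs i \<in> Delta_lr f N cs x)"

end

theory Submission
  imports Defs
begin

text \<open>
  Off \<open>c\<close> the map is the contracted rotation \<open>x \<mapsto> \<lambda>x + \<mu> mod 1\<close>, whose range misses the open
  interval between \<open>f 1 = \<lambda> + \<mu> - 1\<close> and \<open>f 0 = \<mu>\<close>. The gaps \<open>f\<^sup>k [f 1, f 0]\<close> never contain
  \<open>c\<close>, so they are intervals of length \<open>\<lambda>\<^sup>k (1 - \<lambda>)\<close>, pairwise disjoint because \<open>f\<close> is injective
  off \<open>c\<close>. Their lengths add up to 1, so the gaps are dense and their complement \<open>K\<close> in \<open>[0, 1]\<close>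
  is a Cantor set. Atoms of generation \<open>n\<close> avoid the first \<open>n\<close> gaps and every point of \<open>K\<close>
  lies in one of them, so the attractor is \<open>K\<close>; the left gap endpoints, which lie on the orbit
  of \<open>f\<^sub>1 c = 1\<close>, are dense in \<open>K\<close>.

  For P6, an orbit staying out of \<open>(c - \<epsilon>, c)\<close> would drag along a nearby point of a gap, whose
  images run through gaps that accumulate at \<open>c\<close> from the left; the right side follows from
  the symmetry \<open>x \<mapsto> 1 - x\<close>. Along a backward orbit of \<open>c\<close>, which avoids all gaps, small
  neighbourhoods are mapped onto neighbourhoods, so atoms of every generation contain a
  neighbourhood of \<open>c\<close>.
\<close>

lemma connected_component_eq_singleton_real:
  fixes S :: "real set"
  assumes "x \<in> S" and no_interval: "\<And>p q. p < q \<Longrightarrow> \<not> {p..q} \<subseteq> S"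
  shows "connected_component_set S x = {x}"
proof -
  define C where "C = connected_component_set S x"
  have x: "x \<in> C" and "C \<subseteq> S"
    using assms(1) connected_component_subset by (auto simp: C_def)
  have interval: "\<forall>a\<in>C. \<forall>b\<in>C. \<forall>t\<ge>a. t \<le> b \<longrightarrow> t \<in> C"
    using connected_connected_component[of S x] unfolding C_def connected_iff_interval .
  have "y = x" if y: "y \<in> C" for y
  proof (rule ccontr)
    assume "y \<noteq> x"
    define p q where "p = min x y" and "q = max x y"
    have "p \<in> C" "q \<in> C" "p < q"
      unfolding p_def q_def using x y \<open>y \<noteq> x\<close> by (auto simp: min_def max_def)
    then have "t \<in> S" if "p \<le> t" "t \<le> q" for t
      using interval \<open>C \<subseteq> S\<close> that by blast
    then have "{p..q} \<subseteq> S"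
      by auto
    then show False
      using no_interval[OF \<open>p < q\<close>] by blast
  qed
  then show ?thesis
    using x unfolding C_def by blast
qed

lemma interval_meets_gap:
  fixes a b :: "nat \<Rightarrow> real"
  assumes disjoint: "disjoint_family (\<lambda>k. {a k<..<b k})"
    and ordered: "\<And>k. a k \<le> b k"
    and inside: "\<And>k. {a k<..<b k} \<subseteq> {u..v}"
    and lengths: "(\<lambda>k. b k - a k) sums (v - u)"
    and "u \<le> p" "p < q" "q \<le> v"
  shows "\<exists>k. {p<..<q} \<inter> {a k<..<b k} \<noteq> {}"
proof (rule ccontr)
  assume "\<not> ?thesis"
  then have avoid: "{p<..<q} \<inter> (\<Union>k<n. {a k<..<b k}) = {}" for n
    by blast
  have "eventually (\<lambda>n. v - u - (q - p) < (\<Sum>k<n. b k - a k)) sequentially"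
    using lengths \<open>p < q\<close> unfolding sums_def by (intro order_tendstoD(1)) auto
  then obtain n where n: "v - u - (q - p) < (\<Sum>k<n. b k - a k)"
    by (auto simp: eventually_sequentially)
  define G where "G = (\<Union>k<n. {a k<..<b k})"
  have G_sub: "G \<subseteq> {u..v}"
    using inside unfolding G_def by blast
  have uv_fin: "{u..v} \<in> fmeasurable lborel"
    by (metis cbox_interval fmeasurable_cbox)
  have "open G"
    unfolding G_def by auto
  then have G_fin: "G \<in> fmeasurable lborel"
    using fmeasurableI2[OF uv_fin G_sub] by simp
  have "measure lborel G = (\<Sum>k<n. b k - a k)"
    unfolding G_def using disjoint ordered
    by (subst measure_finite_Union) (auto simp: disjoint_family_on_def)
  moreover have "measure lborel (G \<union> {p<..<q}) = measure lborel G + (q - p)"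
    using avoid[of n] G_fin \<open>p < q\<close> unfolding G_def
    by (subst measure_Union) (simp_all add: fmeasurableD2 Int_commute)
  moreover have "measure lborel (G \<union> {p<..<q}) \<le> measure lborel {u..v}"
  proof (rule measure_mono_fmeasurable[OF _ _ uv_fin])
    show "G \<union> {p<..<q} \<subseteq> {u..v}"
      using G_sub assms(5-7) by auto
    show "G \<union> {p<..<q} \<in> sets lborel"
      using \<open>open G\<close> by (simp add: open_Un)
  qed
  moreover have "measure lborel {u..v} = v - u"
    using assms(5-7) by simp
  ultimately show False
    using n by linarith
qed

lemma ball_subset_image_affine:
  fixes f :: "real \<Rightarrow> real"
  assumes "0 < lam" and affine: "\<And>z. z \<in> ball x r \<Longrightarrow> f z = lam * z + \<beta>"
  shows "ball (f x) (lam * r) \<subseteq> f ` ball x r"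
proof
  fix y assume y: "y \<in> ball (f x) (lam * r)"
  then have "dist (f x) y < lam * r"
    by simp
  then have "0 < lam * r"
    using zero_le_dist[of "f x" y] by linarith
  then have "0 < r"
    using \<open>0 < lam\<close> by (simp add: zero_less_mult_iff)
  then have fx: "f x = lam * x + \<beta>"
    by (simp add: affine)
  define z where "z = (y - \<beta>) / lam"
  have lam_z: "lam * z = y - \<beta>"
    using \<open>0 < lam\<close> by (simp add: z_def)
  have "\<bar>lam * x + \<beta> - y\<bar> < lam * r"
    using y fx by (simp add: dist_real_def)
  then have "\<bar>lam * z - lam * x\<bar> < lam * r"
    using lam_z by arith
  moreover have "\<bar>lam * z - lam * x\<bar> = lam * \<bar>z - x\<bar>"
    using \<open>0 < lam\<close> by (simp add: right_diff_distrib[symmetric] abs_mult abs_of_pos)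
  ultimately have "lam * \<bar>z - x\<bar> < lam * r"
    by simp
  then have z: "z \<in> ball x r"
    using \<open>0 < lam\<close> by (simp add: dist_real_def abs_minus_commute)
  then have "f z = y"
    using affine lam_z by simp
  with z show "y \<in> f ` ball x r"
    by blast
qed

lemma funpow_reflect:
  fixes f :: "'a::ab_group_add \<Rightarrow> 'a"
  shows "(\<lambda>x. a - f (a - x)) ^^ n = (\<lambda>x. a - (f ^^ n) (a - x))"
  by (induction n) auto

locale gap_family =
  fixes a b :: "nat \<Rightarrow> real" and u v :: real
  assumes gap_nonempty: "a k < b k"
    and gap_inside: "u < a k" "b k < v"
    and gaps_disjoint: "k \<noteq> m \<Longrightarrow> {a k..b k} \<inter> {a m..b m} = {}"
    and gaps_dense: "u \<le> p \<Longrightarrow> p < q \<Longrightarrow> q \<le> v \<Longrightarrow> \<exists>k. {p<..<q} \<inter> {a k<..<b k} \<noteq> {}"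
begin

definition gap_complement :: "real set" where
  "gap_complement = {u..v} - (\<Union>k. {a k<..<b k})"

lemma mem_gap_complement:
  "x \<in> gap_complement \<longleftrightarrow> u \<le> x \<and> x \<le> v \<and> (\<forall>k. x \<notin> {a k<..<b k})"
  by (auto simp: gap_complement_def)

lemma closed_gap_complement: "closed gap_complement"
  unfolding gap_complement_def by (intro closed_Diff open_UN) auto

lemma endpoint_not_in_gap:
  assumes "x = a k \<or> x = b k" shows "x \<notin> {a m<..<b m}"
  using assms gaps_disjoint[of k m] gap_nonempty[of k] by (cases "k = m") auto

lemma left_endpoint_in_gap_complement: "a k \<in> gap_complement"
  using endpoint_not_in_gap[of "a k" k] gap_nonempty[of k] gap_inside[of k]
  by (auto simp: mem_gap_complement)

lemma right_endpoint_in_gap_complement: "b k \<in> gap_complement"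
  using endpoint_not_in_gap[of "b k" k] gap_nonempty[of k] gap_inside[of k]
  by (auto simp: mem_gap_complement)

lemma lower_less_upper: "u < v"
  using gap_inside(1)[of 0] gap_nonempty[of 0] gap_inside(2)[of 0] by linarith

lemma lower_end_in_gap_complement: "u \<in> gap_complement"
proof -
  have "u \<notin> {a k<..<b k}" for k
    using gap_inside(1)[of k] by auto
  then show ?thesis
    using lower_less_upper by (auto simp: mem_gap_complement)
qed

lemma gap_between:
  assumes "x \<in> gap_complement" "y \<in> gap_complement" "x < y"
  shows "\<exists>k. x \<le> a k \<and> b k \<le> y"
proof -
  obtain k where "{x<..<y} \<inter> {a k<..<b k} \<noteq> {}"
    using gaps_dense[of x y] assms by (auto simp: mem_gap_complement)
  then obtain z where "z \<in> {x<..<y}" "z \<in> {a k<..<b k}"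
    by blast
  moreover have "x \<notin> {a k<..<b k}" "y \<notin> {a k<..<b k}"
    using assms by (auto simp: mem_gap_complement)
  ultimately show ?thesis
    by (intro exI[of _ k]) auto
qed

lemma approach_from_right:
  assumes "x \<in> gap_complement" "x < v" "x \<notin> range a" "0 < d"
  shows "\<exists>e\<in>gap_complement. x < e \<and> e < x + d"
proof -
  obtain z where z: "x < z" "z < x + d" "z < v"
    using dense[of x "min (x + d) v"] assms(2,4) by auto
  show ?thesis
  proof (cases "z \<in> gap_complement")
    case False
    then obtain m where m: "a m < z" "z < b m"
      using z assms(1) by (auto simp: mem_gap_complement)
    have "x \<notin> {a m<..<b m}" "x \<noteq> a m"
      using assms(1,3) unfolding mem_gap_complement by auto
    then have "x < a m"
      using m z by (meson greaterThanLessThan_iff less_trans linorder_neqE_linordered_idom)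
    then show ?thesis
      using left_endpoint_in_gap_complement[of m] m z by (intro bexI[of _ "a m"]) auto
  qed (use z in auto)
qed

lemma approach_from_left:
  assumes "x \<in> gap_complement" "u < x" "x \<notin> range b" "0 < d"
  shows "\<exists>e\<in>gap_complement. x - d < e \<and> e < x"
proof -
  obtain z where z: "z < x" "x - d < z" "u < z"
    using dense[of "max (x - d) u" x] assms(2,4) by auto
  show ?thesis
  proof (cases "z \<in> gap_complement")
    case False
    then obtain m where m: "a m < z" "z < b m"
      using z assms(1) by (auto simp: mem_gap_complement)
    have "x \<notin> {a m<..<b m}" "x \<noteq> b m"
      using assms(1,3) unfolding mem_gap_complement by auto
    then have "b m < x"
      using m z by (meson greaterThanLessThan_iff less_trans linorder_neqE_linordered_idom)
    then show ?thesis
      using right_endpoint_in_gap_complement[of m] m z by (intro bexI[of _ "b m"]) auto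
  qed (use z in auto)
qed

lemma limpt_gap_complement:
  assumes "x \<in> gap_complement" shows "x islimpt gap_complement"
  unfolding islimpt_approachable_real
proof (intro allI impI)
  fix d :: real assume "0 < d"
  let ?goal = "\<exists>e\<in>gap_complement. e \<noteq> x \<and> \<bar>e - x\<bar> < d"
  have from_left: ?goal if side: "u < x" "x \<notin> range b"
  proof -
    obtain e where "e \<in> gap_complement" "x - d < e" "e < x"
      using approach_from_left[OF assms side \<open>0 < d\<close>] by blast
    then show ?goal
      by (intro bexI[of _ e]) auto
  qed
  have from_right: ?goal if side: "x < v" "x \<notin> range a"
  proof -
    obtain e where "e \<in> gap_complement" "x < e" "e < x + d"
      using approach_from_right[OF assms side \<open>0 < d\<close>] by blast
    then show ?goal
      by (intro bexI[of _ e]) auto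
  qed
  have x: "u \<le> x" "x \<le> v"
    using assms by (auto simp: mem_gap_complement)
  show ?goal
  proof (cases "x \<in> range a")
    case True
    then obtain k where "x = a k"
      by blast
    moreover have "a k \<noteq> b m" for m
      using gaps_disjoint[of k m] gap_nonempty[of k] gap_nonempty[of m] by (cases "k = m") auto
    ultimately show ?goal
      using from_left gap_inside(1)[of k] by auto
  next
    case False
    show ?goal
    proof (cases "x < v")
      case False
      then have "x = v"
        using x by simp
      moreover have "v \<notin> range b"
        using gap_inside(2) by (auto simp: less_imp_neq)
      ultimately show ?goal
        using from_left lower_less_upper by simp
    qed (use False from_right in auto)
  qed
qed

lemma gap_complement_no_interval:
  assumes "p < q" shows "\<not> {p..q} \<subseteq> gap_complement"
proof
  assume sub: "{p..q} \<subseteq> gap_complement"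
  then have "p \<in> gap_complement" "q \<in> gap_complement"
    using assms by auto
  then have "u \<le> p" "q \<le> v"
    by (auto simp: mem_gap_complement)
  then obtain k where "{p<..<q} \<inter> {a k<..<b k} \<noteq> {}"
    using gaps_dense[OF _ assms] by auto
  then obtain z where z: "z \<in> {p<..<q}" "z \<in> {a k<..<b k}"
    by blast
  then have "z \<in> gap_complement"
    using sub by auto
  with z(2) show False
    unfolding mem_gap_complement by blast
qed

theorem cantor_set_gap_complement: "cantor_set gap_complement"
  unfolding cantor_set_def
proof (intro conjI ballI)
  show "gap_complement \<noteq> {}"
    using lower_end_in_gap_complement by auto
  have "gap_complement \<subseteq> {u..v}"
    by (auto simp: gap_complement_def)
  then show "compact gap_complement"
    using closed_gap_complement by (meson bounded_closed_interval bounded_subset compact_eq_bounded_closed)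
qed (use limpt_gap_complement connected_component_eq_singleton_real gap_complement_no_interval in auto)

lemma gap_complement_subset_closure_left_endpoints: "gap_complement \<subseteq> closure (range a)"
proof
  fix x assume x: "x \<in> gap_complement"
  show "x \<in> closure (range a)"
    unfolding closure_approachable
  proof (intro allI impI)
    fix d :: real assume "0 < d"
    then obtain y where y: "y \<in> gap_complement" "y \<noteq> x" "\<bar>y - x\<bar> < d"
      using limpt_gap_complement[OF x] unfolding islimpt_approachable_real by blast
    obtain k where "min x y \<le> a k" "b k \<le> max x y"
      using gap_between[of "min x y" "max x y"] x y by (cases "x < y") (auto simp: min_def max_def)
    then have "dist (a k) x < d"
      using y gap_nonempty[of k] by (auto simp: dist_real_def min_def max_def split: if_splits)
    then show "\<exists>e\<in>range a. dist e x < d"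
      by blast
  qed
qed

lemma gaps_accumulate_from_left:
  assumes "x \<in> gap_complement" "u < x" "x \<notin> range b" "0 < d"
  shows "\<exists>k\<ge>n. x - d < a k \<and> b k < x"
  using \<open>0 < d\<close>
proof (induction n arbitrary: d)
  case 0
  obtain e where e: "e \<in> gap_complement" "x - d < e" "e < x"
    using approach_from_left[OF assms(1-3) \<open>0 < d\<close>] by blast
  obtain k where "e \<le> a k" "b k \<le> x"
    using gap_between[OF e(1) assms(1) e(3)] by blast
  moreover have "b k \<noteq> x"
    using assms(3) by auto
  ultimately show ?case
    using e by (intro exI[of _ k]) auto
next
  case (Suc n)
  obtain k where k: "k \<ge> n" "x - d < a k" "b k < x"
    using Suc by blast
  show ?case
  proof (cases "k = n")
    case True
    obtain k' where "k' \<ge> n" "x - (x - b n) < a k'" "b k' < x"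
      using Suc.IH[of "x - b n"] k True by auto
    moreover have "k' \<noteq> n"
      using calculation gap_nonempty[of n] by auto
    ultimately show ?thesis
      using k True gap_nonempty[of n] by (intro exI[of _ k']) auto
  next
    case False
    then show ?thesis
      using k by (intro exI[of _ k]) auto
  qed
qed

end

locale contracted_rotation =
  fixes lam mu c :: real and f :: "real \<Rightarrow> real"
  assumes lam_pos: "0 < lam" and lam_less_1: "lam < 1"
    and mu_pos: "0 < mu" and mu_less_1: "mu < 1" and lam_mu: "1 < lam + mu"
    and c_eq: "c = (1 - mu) / lam"
    and f_left: "\<And>x. 0 \<le> x \<Longrightarrow> x < c \<Longrightarrow> f x = lam * x + mu"
    and f_right: "\<And>x. c < x \<Longrightarrow> x \<le> 1 \<Longrightarrow> f x = lam * x + mu - 1"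
    and c_not_in_gap_images: "\<And>k. c \<notin> (f ^^ k) ` {f 1..f 0}"
begin

lemma lam_c: "lam * c = 1 - mu"
  using lam_pos by (simp add: c_eq)

lemma c_pos: "0 < c" and c_less_1: "c < 1"
  using lam_pos lam_mu mu_less_1 by (auto simp: c_eq field_simps)

lemma f_0: "f 0 = mu"
  using f_left[of 0] c_pos by simp

lemma f_1: "f 1 = lam + mu - 1"
  using f_right[of 1] c_less_1 by simp

lemma f_left_bounds:
  assumes "0 \<le> x" "x < c" shows "f 0 \<le> f x" "f x < 1"
proof -
  have "0 \<le> lam * x" "lam * x < lam * c"
    using assms lam_pos by auto
  then show "f 0 \<le> f x" "f x < 1"
    using f_left[OF assms] f_0 lam_c by auto
qed

lemma f_right_bounds:
  assumes "c < x" "x \<le> 1" shows "0 < f x" "f x \<le> f 1"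
proof -
  have "lam * c < lam * x" "lam * x \<le> lam"
    using assms lam_pos by auto
  then show "0 < f x" "f x \<le> f 1"
    using f_right[OF assms] f_1 lam_c by auto
qed

lemma f_1_less_f_0: "f 1 < f 0"
  using lam_less_1 by (simp add: f_0 f_1)

lemma f_in_unit_interval: "x \<in> {0..1} - {c} \<Longrightarrow> f x \<in> {0<..<1}"
  using f_left_bounds[of x] f_right_bounds[of x] f_0 mu_pos f_1_less_f_0 mu_less_1
  by (cases "x < c") auto

lemma f_not_in_first_gap: "x \<in> {0..1} - {c} \<Longrightarrow> f x \<notin> {f 1<..<f 0}"
  using f_left_bounds[of x] f_right_bounds[of x] by (cases "x < c") auto

lemma inj_on_f: "inj_on f ({0..1} - {c})"
proof
  fix x y assume x: "x \<in> {0..1} - {c}" and y: "y \<in> {0..1} - {c}" and "f x = f y"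
  consider "x < c" "y < c" | "c < x" "c < y" | "x < c" "c < y" | "c < x" "y < c"
    using x y by fastforce
  then show "x = y"
  proof cases
    case 1
    then show ?thesis using \<open>f x = f y\<close> x y f_left lam_pos by auto
  next
    case 2
    then show ?thesis using \<open>f x = f y\<close> x y f_right lam_pos by auto
  next
    case 3
    then show ?thesis
      using \<open>f x = f y\<close> x y f_left_bounds[of x] f_right_bounds[of y] f_1_less_f_0 by auto
  next
    case 4
    then show ?thesis
      using \<open>f x = f y\<close> x y f_left_bounds[of y] f_right_bounds[of x] f_1_less_f_0 by auto
  qed
qed

lemma f_image_interval:
  assumes "{p..q} \<subseteq> {0..1} - {c}" "p \<le> q"
  shows "f ` {p..q} = {f p..f q}" "f q - f p = lam * (q - p)"
proof -
  have "c \<notin> {p..q}" "0 \<le> p" "q \<le> 1"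
    using assms by auto
  then consider "q < c" | "c < p"
    using assms(2) by fastforce
  then obtain \<beta> where \<beta>: "\<And>x. x \<in> {p..q} \<Longrightarrow> f x = lam * x + \<beta>"
  proof cases
    case 1
    then show ?thesis
      using that[of mu] f_left \<open>0 \<le> p\<close> by auto
  next
    case 2
    then show ?thesis
      using that[of "mu - 1"] f_right \<open>q \<le> 1\<close> by auto
  qed
  have "f ` {p..q} = (\<lambda>x. lam * x + \<beta>) ` {p..q}"
    using \<beta> by (rule image_cong[OF refl])
  also have "\<dots> = {lam * p + \<beta>..lam * q + \<beta>}"
    using assms(2) lam_pos by (simp add: image_affinity_atLeastAtMost)
  finally show "f ` {p..q} = {f p..f q}"
    using \<beta> assms(2) by simp
  show "f q - f p = lam * (q - p)"
    using \<beta> assms(2) by (simp add: algebra_simps)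
qed

definition lo :: "nat \<Rightarrow> real" where
  "lo k = (f ^^ Suc k) 1"

definition hi :: "nat \<Rightarrow> real" where
  "hi k = (f ^^ Suc k) 0"

lemma lo_0: "lo 0 = f 1" and hi_0: "hi 0 = f 0"
  by (simp_all add: lo_def hi_def)

lemma lo_Suc: "lo (Suc k) = f (lo k)" and hi_Suc: "hi (Suc k) = f (hi k)"
  by (simp_all add: lo_def hi_def)

lemma funpow_first_gap:
  "(f ^^ k) ` {f 1..f 0} = {lo k..hi k} \<and> {lo k..hi k} \<subseteq> {0<..<1} - {c} \<and>
    hi k - lo k = lam ^ k * (1 - lam)"
proof (induction k)
  case 0
  have "{f 1..f 0} \<subseteq> {0<..<1}"
    using f_0 f_1 lam_mu mu_less_1 by auto
  moreover have "c \<notin> {f 1..f 0}"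
    using c_not_in_gap_images[of 0] by simp
  ultimately show ?case
    using f_0 f_1 by (auto simp: lo_0 hi_0)
next
  case (Suc k)
  have "0 < lam ^ k * (1 - lam)"
    using lam_pos lam_less_1 by simp
  then have le: "lo k \<le> hi k"
    using Suc.IH by linarith
  have sub: "{lo k..hi k} \<subseteq> {0..1} - {c}"
    using Suc.IH by auto
  have "(f ^^ Suc k) ` {f 1..f 0} = f ` ((f ^^ k) ` {f 1..f 0})"
    by (metis funpow.simps(2) image_comp)
  then have img: "(f ^^ Suc k) ` {f 1..f 0} = {lo (Suc k)..hi (Suc k)}"
    using Suc.IH f_image_interval(1)[OF sub le] by (simp add: lo_Suc hi_Suc)
  moreover have "c \<notin> {lo (Suc k)..hi (Suc k)}"
    using c_not_in_gap_images[of "Suc k"] img by simp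
  moreover have "lo k \<in> {0..1} - {c}" "hi k \<in> {0..1} - {c}"
    using sub le by auto
  then have "f (lo k) \<in> {0<..<1}" "f (hi k) \<in> {0<..<1}"
    by (simp_all only: f_in_unit_interval)
  moreover have "hi (Suc k) - lo (Suc k) = lam ^ Suc k * (1 - lam)"
    using f_image_interval(2)[OF sub le] Suc.IH by (simp add: lo_Suc hi_Suc)
  ultimately show ?case
    by (auto simp: lo_Suc hi_Suc)
qed

lemma gap_length: "hi k - lo k = lam ^ k * (1 - lam)"
  using funpow_first_gap by blast

lemma lo_less_hi: "lo k < hi k"
proof -
  have "0 < lam ^ k * (1 - lam)"
    using lam_pos lam_less_1 by simp
  then show ?thesis
    using gap_length[of k] by linarith
qed

lemma gap_subset: "{lo k..hi k} \<subseteq> {0<..<1} - {c}"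
  using funpow_first_gap by blast

lemma lo_pos: "0 < lo k" and hi_less_1: "hi k < 1"
proof -
  have "lo k \<in> {lo k..hi k}" "hi k \<in> {lo k..hi k}"
    using lo_less_hi[of k] by auto
  then show "0 < lo k" "hi k < 1"
    using gap_subset[of k] by auto
qed

lemma gap_subset_domain: "{lo k..hi k} \<subseteq> {0..1} - {c}"
  using gap_subset[of k] by auto

lemma gap_endpoints_in_domain: "lo k \<in> {0..1} - {c}" "hi k \<in> {0..1} - {c}"
proof -
  have "lo k \<in> {lo k..hi k}" "hi k \<in> {lo k..hi k}"
    using lo_less_hi[of k] by auto
  then show "lo k \<in> {0..1} - {c}" "hi k \<in> {0..1} - {c}"
    using gap_subset_domain[of k] by blast+
qed

lemma gap_image: "f ` {lo k..hi k} = {lo (Suc k)..hi (Suc k)}"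
  using f_image_interval(1)[OF gap_subset_domain] lo_less_hi[of k]
  by (simp add: lo_Suc hi_Suc)

lemma image_gap_disjoint_first_gap: "f ` {lo k..hi k} \<inter> {lo 0..hi 0} = {}"
proof -
  have "f x \<notin> {f 1..f 0}" if x: "x \<in> {lo k..hi k}" for x
  proof -
    have dom: "x \<in> {0..1} - {c}" "x \<noteq> 0" "x \<noteq> 1"
      using gap_subset[of k] x by auto
    have "0 \<in> {0..1} - {c}" "1 \<in> {0..1} - {c}"
      using c_pos c_less_1 by auto
    then have "f x \<noteq> f 1" "f x \<noteq> f 0"
      using inj_onD[OF inj_on_f _ dom(1)] dom(2,3) by metis+
    then show ?thesis
      using f_not_in_first_gap[OF dom(1)] by auto
  qed
  then show ?thesis
    by (auto simp: lo_0 hi_0)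
qed

lemma gaps_pairwise_disjoint:
  assumes "k \<noteq> m" shows "{lo k..hi k} \<inter> {lo m..hi m} = {}"
proof -
  have shifted: "{lo j..hi j} \<inter> {lo (j + Suc i)..hi (j + Suc i)} = {}" for i j
  proof (induction j)
    case 0
    show ?case
      using image_gap_disjoint_first_gap[of i] gap_image[of i] by auto
  next
    case (Suc j)
    have "{lo (Suc j)..hi (Suc j)} \<inter> {lo (Suc j + Suc i)..hi (Suc j + Suc i)} =
        f ` ({lo j..hi j} \<inter> {lo (j + Suc i)..hi (j + Suc i)})"
      using inj_on_image_Int[OF inj_on_f gap_subset_domain gap_subset_domain] gap_image by simp
    then show ?case
      using Suc.IH by simp
  qed
  show ?thesis
  proof (cases "k < m")
    case True
    then show ?thesis
      using shifted[of k "m - k - 1"] by simp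
  next
    case False
    then show ?thesis
      using shifted[of m "k - m - 1"] assms by (simp add: Int_commute)
  qed
qed

lemma gap_step:
  assumes "x \<in> {0..1} - {c}"
  shows "f x \<in> {lo (Suc k)<..<hi (Suc k)} \<longleftrightarrow> x \<in> {lo k<..<hi k}"
proof
  assume fx: "f x \<in> {lo (Suc k)<..<hi (Suc k)}"
  then have "f x \<in> f ` {lo k..hi k}"
    using gap_image[of k] by auto
  then obtain y where y: "y \<in> {lo k..hi k}" "f x = f y"
    by auto
  moreover have "y \<in> {0..1} - {c}"
    using y(1) gap_subset_domain[of k] by blast
  ultimately have "x = y"
    using inj_onD[OF inj_on_f _ assms] by metis
  moreover have "y \<noteq> lo k" "y \<noteq> hi k"
    using fx y by (auto simp: lo_Suc hi_Suc)
  ultimately show "x \<in> {lo k<..<hi k}"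
    using y by auto
next
  assume x: "x \<in> {lo k<..<hi k}"
  then have "f x \<in> {lo (Suc k)..hi (Suc k)}"
    using gap_image[of k] by auto
  moreover have "f x \<noteq> f (lo k)" "f x \<noteq> f (hi k)"
    using inj_onD[OF inj_on_f _ assms] gap_endpoints_in_domain[of k] x by fastforce+
  ultimately show "f x \<in> {lo (Suc k)<..<hi (Suc k)}"
    by (auto simp: lo_Suc hi_Suc)
qed

lemma open_gaps_disjoint: "disjoint_family (\<lambda>k. {lo k<..<hi k})"
  unfolding disjoint_family_on_def
proof (intro ballI impI)
  fix m n :: nat assume "m \<noteq> n"
  then have "{lo m..hi m} \<inter> {lo n..hi n} = {}"
    by (rule gaps_pairwise_disjoint)
  moreover have "{lo m<..<hi m} \<subseteq> {lo m..hi m}" "{lo n<..<hi n} \<subseteq> {lo n..hi n}"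
    by auto
  ultimately show "{lo m<..<hi m} \<inter> {lo n<..<hi n} = {}"
    by blast
qed

lemma gap_lengths_sum: "(\<lambda>k. hi k - lo k) sums 1"
proof -
  have "(\<lambda>k. lam ^ k * (1 - lam)) sums (1 / (1 - lam) * (1 - lam))"
    using geometric_sums[of lam] lam_pos lam_less_1 by (intro sums_mult2) auto
  then show ?thesis
    using lam_less_1 by (simp add: gap_length)
qed

sublocale gap_family lo hi 0 1
proof
  show "lo k < hi k" "0 < lo k" "hi k < 1" for k
    using lo_less_hi lo_pos hi_less_1 by auto
  show "{lo k..hi k} \<inter> {lo m..hi m} = {}" if "k \<noteq> m" for k m
    using that by (rule gaps_pairwise_disjoint)
  have inside: "{lo k<..<hi k} \<subseteq> {0..1}" for k
    using lo_pos[of k] hi_less_1[of k] by auto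
  show "\<exists>k. {p<..<q} \<inter> {lo k<..<hi k} \<noteq> {}" if "0 \<le> p" "p < q" "q \<le> 1" for p q
    using that open_gaps_disjoint gap_lengths_sum lo_less_hi inside
    by (intro interval_meets_gap[where u=0 and v=1]) (auto intro: less_imp_le)
qed

lemma f_onto_outside_first_gap:
  assumes "y \<in> {0<..<1}" "y \<notin> {lo 0<..<hi 0}"
  obtains x where "x \<in> {0..1} - {c}" "f x = y"
proof (cases "mu \<le> y")
  case True
  define x where "x = (y - mu) / lam"
  have lam_x: "lam * x = y - mu"
    using lam_pos by (simp add: x_def)
  have "lam * x < lam * c"
    using lam_x assms(1) lam_c by simp
  then have "x < c"
    using lam_pos by simp
  moreover have "0 \<le> x"
    using True lam_pos by (simp add: x_def)
  ultimately show ?thesis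
    using that[of x] f_left lam_x c_less_1 by auto
next
  case False
  then have y_le: "y \<le> lam + mu - 1"
    using assms(2) by (auto simp: lo_0 hi_0 f_0 f_1)
  define x where "x = (y - mu + 1) / lam"
  have lam_x: "lam * x = y - mu + 1"
    using lam_pos by (simp add: x_def)
  then have "lam * c < lam * x" "lam * x \<le> lam * 1"
    using y_le assms(1) lam_c by auto
  then have "c < x" "x \<le> 1"
    using lam_pos by auto
  then show ?thesis
    using that[of x] f_right lam_x c_pos by auto
qed

abbreviation cs :: "nat \<Rightarrow> real" where
  "cs \<equiv> \<lambda>i. if i = 0 then 0 else if i = 1 then c else 1"

lemma Xp_subset: "Xp 2 cs i \<subseteq> {0..1} - {c}"
  using c_pos c_less_1 by (auto simp: Xp_def)

lemma atom_Nil: "atom f 2 cs [] = {0..1}"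
  by (simp add: atom_def XX_def)

lemma atom_snoc: "atom f 2 cs (w @ [i]) = closure (f ` (atom f 2 cs w \<inter> Xp 2 cs i))"
  by (simp add: atom_def Fop_def)

lemma closed_atom: "closed (atom f 2 cs w)"
  by (induction w rule: rev_induct) (simp_all add: atom_Nil atom_snoc)

lemma atom_subset: "atom f 2 cs w \<subseteq> {0..1}"
proof (induction w rule: rev_induct)
  case (snoc i w)
  have "f ` (atom f 2 cs w \<inter> Xp 2 cs i) \<subseteq> {0..1}"
    using f_in_unit_interval Xp_subset[of i] by fastforce
  then show ?case
    unfolding atom_snoc by (intro closure_minimal) auto
qed (simp add: atom_Nil)

lemma atom_avoids_gaps: "k < length w \<Longrightarrow> atom f 2 cs w \<inter> {lo k<..<hi k} = {}"
proof (induction w arbitrary: k rule: rev_induct)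
  case (snoc i w)
  have "f x \<notin> {lo k<..<hi k}" if x: "x \<in> atom f 2 cs w" "x \<in> Xp 2 cs i" for x
  proof -
    have dom: "x \<in> {0..1} - {c}"
      using x(2) Xp_subset by blast
    show ?thesis
    proof (cases k)
      case 0
      then show ?thesis
        using f_not_in_first_gap[OF dom] by (simp add: lo_0 hi_0)
    next
      case (Suc j)
      then have "x \<notin> {lo j<..<hi j}"
        using snoc.IH[of j] snoc.prems x(1) by auto
      then show ?thesis
        using gap_step[OF dom] Suc by simp
    qed
  qed
  then have "{lo k<..<hi k} \<inter> closure (f ` (atom f 2 cs w \<inter> Xp 2 cs i)) = {}"
    by (subst open_Int_closure_eq_empty) auto
  then show ?case
    unfolding atom_snoc by blast
qed simp

lemma gap_complement_in_atom:
  assumes "x \<in> gap_complement"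
  shows "\<exists>w. length w = n \<and> set w \<subseteq> {1..2} \<and> x \<in> atom f 2 cs w"
  using assms
proof (induction n arbitrary: x)
  case 0
  then show ?case
    by (auto simp: atom_Nil mem_gap_complement)
next
  case (Suc n)
  define G where "G = \<Union> (atom f 2 cs ` {w. set w \<subseteq> {1..2} \<and> length w = Suc n})"
  have "closed G"
    unfolding G_def using closed_atom by (intro closed_Union finite_imageI finite_lists_length_eq) auto
  have inner: "y \<in> G" if y: "y \<in> gap_complement - {0, 1}" for y
  proof -
    have "y \<in> {0<..<1}" "y \<notin> {lo 0<..<hi 0}"
      using y by (auto simp: mem_gap_complement)
    then obtain x where x: "x \<in> {0..1} - {c}" "f x = y"
      by (rule f_onto_outside_first_gap)
    have "x \<notin> {lo k<..<hi k}" for k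
      using gap_step[OF x(1), of k] x(2) y by (auto simp: mem_gap_complement)
    then have "x \<in> gap_complement"
      using x(1) by (simp add: mem_gap_complement)
    then obtain w where w: "length w = n" "set w \<subseteq> {1..2}" "x \<in> atom f 2 cs w"
      using Suc.IH by blast
    define i :: nat where "i = (if x < c then 1 else 2)"
    have "x \<in> Xp 2 cs i"
      using x(1) by (auto simp: i_def Xp_def)
    then have "y \<in> f ` (atom f 2 cs w \<inter> Xp 2 cs i)"
      using w(3) x(2) by blast
    then have "y \<in> atom f 2 cs (w @ [i])"
      unfolding atom_snoc by (rule closure_subset[THEN subsetD])
    moreover have "set (w @ [i]) \<subseteq> {1..2}" "length (w @ [i]) = Suc n"
      using w by (auto simp: i_def)
    ultimately show "y \<in> G"
      unfolding G_def by blast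
  qed
  \<comment> \<open>\<open>0\<close> and \<open>1\<close> are not in the range of \<open>f\<close>; they are limits of other points of the perfect set.\<close>
  have "x islimpt insert 0 (insert 1 (gap_complement - {0, 1}))"
    by (rule islimpt_subset[OF limpt_gap_complement[OF Suc.prems]]) auto
  then have "x \<in> closure (gap_complement - {0, 1})"
    by (simp add: islimpt_insert closure_def)
  then have "x \<in> G"
    using closure_minimal[OF _ \<open>closed G\<close>] inner by blast
  then show ?case
    unfolding G_def by blast
qed

lemma attractor_eq_gap_complement: "attractor f 2 cs = gap_complement"
proof
  show "attractor f 2 cs \<subseteq> gap_complement"
  proof
    fix x assume x: "x \<in> attractor f 2 cs"
    have in_atom: "\<exists>w. length w = n \<and> x \<in> atom f 2 cs w" if "n \<ge> 1" for n
      using x that unfolding attractor_def atoms_def by blast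
    then obtain w where "x \<in> atom f 2 cs w"
      by blast
    then have "x \<in> {0..1}"
      using atom_subset by blast
    moreover have "x \<notin> {lo k<..<hi k}" for k
    proof -
      obtain w where "length w = Suc k" "x \<in> atom f 2 cs w"
        using in_atom[of "Suc k"] by auto
      then show ?thesis
        using atom_avoids_gaps[of k w] by auto
    qed
    ultimately show "x \<in> gap_complement"
      by (simp add: mem_gap_complement)
  qed
  show "gap_complement \<subseteq> attractor f 2 cs"
  proof
    fix x assume x: "x \<in> gap_complement"
    have "x \<in> \<Union> (atoms f 2 cs n)" for n
      using gap_complement_in_atom[OF x, of n] unfolding atoms_def by blast
    then show "x \<in> attractor f 2 cs"
      unfolding attractor_def by blast
  qed
qed

lemma f_affine_on_piece:
  assumes "i \<in> {1..2}" shows "\<exists>\<beta>. \<forall>x\<in>Xp 2 cs i. f x = lam * x + \<beta>"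
proof -
  have "i = 1 \<or> i = 2"
    using assms by auto
  then show ?thesis
  proof
    assume "i = 1"
    then show ?thesis
      using f_left by (intro exI[of _ mu]) (simp add: Xp_def)
  next
    assume "i = 2"
    then show ?thesis
      using f_right by (intro exI[of _ "mu - 1"]) (simp add: Xp_def)
  qed
qed

lemma f_tendsto_left: "(f \<longlongrightarrow> 1) (at c within {0..<c})"
proof -
  have "((\<lambda>x. lam * x + mu) \<longlongrightarrow> lam * c + mu) (at c within {0..<c})"
    by (intro tendsto_intros)
  moreover have "(f \<longlongrightarrow> lam * c + mu) (at c within {0..<c}) \<longleftrightarrow>
      ((\<lambda>x. lam * x + mu) \<longlongrightarrow> lam * c + mu) (at c within {0..<c})"
    by (rule Lim_cong_within) (auto simp: f_left)
  ultimately show ?thesis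
    using lam_c by simp
qed

lemma f_tendsto_right: "(f \<longlongrightarrow> 0) (at c within {c<..1})"
proof -
  have "((\<lambda>x. lam * x + mu - 1) \<longlongrightarrow> lam * c + mu - 1) (at c within {c<..1})"
    by (intro tendsto_intros)
  moreover have "(f \<longlongrightarrow> lam * c + mu - 1) (at c within {c<..1}) \<longleftrightarrow>
      ((\<lambda>x. lam * x + mu - 1) \<longlongrightarrow> lam * c + mu - 1) (at c within {c<..1})"
    by (rule Lim_cong_within) (auto simp: f_right)
  ultimately show ?thesis
    using lam_c by simp
qed

lemma at_c_left_nontrivial: "at c within {0..<c} \<noteq> bot"
  using c_pos by (simp add: trivial_limit_within)

lemma at_c_right_nontrivial: "at c within {c<..1} \<noteq> bot"
  using c_less_1 by (simp add: trivial_limit_within)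

lemma fext_left: "x \<in> {0..c} \<Longrightarrow> fext f 2 cs 1 x = lam * x + mu"
  using tendsto_Lim[OF at_c_left_nontrivial f_tendsto_left] lam_c f_left
  by (cases "x = c") (auto simp: fext_def Xp_def)

lemma fext_right: "x \<in> {c..1} \<Longrightarrow> fext f 2 cs 2 x = lam * x + mu - 1"
  using tendsto_Lim[OF at_c_right_nontrivial f_tendsto_right] lam_c f_right
  by (cases "x = c") (auto simp: fext_def Xp_def)

lemma closure_Xp_1: "closure (Xp 2 cs 1) = {0..c}"
  using c_pos by (simp add: Xp_def)

lemma closure_Xp_2: "closure (Xp 2 cs 2) = {c..1}"
  using c_less_1 by (simp add: Xp_def)

lemma f_discontinuous_at_c: "\<not> continuous (at c within {0..1}) f"
proof
  assume "continuous (at c within {0..1}) f"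
  then have lim: "(f \<longlongrightarrow> f c) (at c within {0..1})"
    by (simp add: continuous_within)
  have "{0..<c} \<subseteq> {0..1}" "{c<..1} \<subseteq> {0..1}"
    using c_pos c_less_1 by auto
  then have "f c = 1" "f c = 0"
    using tendsto_unique[OF at_c_left_nontrivial tendsto_within_subset[OF lim] f_tendsto_left]
      tendsto_unique[OF at_c_right_nontrivial tendsto_within_subset[OF lim] f_tendsto_right]
    by blast+
  then show False
    by simp
qed

lemma P1_holds: "P1 f 2 cs"
proof -
  have contraction: "\<bar>f x - f y\<bar> \<le> lam * \<bar>x - y\<bar>"
    if i: "i \<in> {1..2}" and xy: "x \<in> Xp 2 cs i" "y \<in> Xp 2 cs i" for i x y
  proof -
    obtain \<beta> where "\<forall>x\<in>Xp 2 cs i. f x = lam * x + \<beta>"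
      using f_affine_on_piece[OF i] by blast
    then show ?thesis
      using xy lam_pos by (simp add: abs_mult flip: right_diff_distrib)
  qed
  have "\<forall>i\<in>{1..2 - 1}. \<not> continuous (at (cs i) within XX 2 cs) f"
    using f_discontinuous_at_c by (simp add: XX_def)
  moreover have "\<exists>k. 0 \<le> k \<and> k < 1 \<and>
      (\<forall>i\<in>{1..2}. \<forall>x\<in>Xp 2 cs i. \<forall>y\<in>Xp 2 cs i. \<bar>f x - f y\<bar> \<le> k * \<bar>x - y\<bar>)"
    using contraction lam_pos lam_less_1 less_imp_le by blast
  moreover have "\<exists>l. 0 < l \<and> l < 1 \<and> (\<forall>i\<in>{1..2}. \<exists>\<beta>. \<forall>x\<in>Xp 2 cs i. f x = l * x + \<beta>)"
    using f_affine_on_piece lam_pos lam_less_1 by blast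
  ultimately show ?thesis
    unfolding P1_def piecewise_contracting_def by blast
qed

lemma inj_on_fext_1: "inj_on (fext f 2 cs 1) (closure (Xp 2 cs 1))"
  unfolding closure_Xp_1
proof (rule inj_onI)
  fix x y assume "x \<in> {0..c}" "y \<in> {0..c}" "fext f 2 cs 1 x = fext f 2 cs 1 y"
  then have "lam * x + mu = lam * y + mu"
    by (simp only: fext_left)
  then show "x = y"
    using lam_pos by simp
qed

lemma inj_on_fext_2: "inj_on (fext f 2 cs 2) (closure (Xp 2 cs 2))"
  unfolding closure_Xp_2
proof (rule inj_onI)
  fix x y assume "x \<in> {c..1}" "y \<in> {c..1}" "fext f 2 cs 2 x = fext f 2 cs 2 y"
  then have "lam * x + mu - 1 = lam * y + mu - 1"
    by (simp only: fext_right)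
  then show "x = y"
    using lam_pos by simp
qed

lemma fext_1_image: "fext f 2 cs 1 ` closure (Xp 2 cs 1) \<subseteq> {f 0..1}"
proof -
  have "fext f 2 cs 1 x \<in> {f 0..1}" if "x \<in> {0..c}" for x
  proof -
    have "0 \<le> lam * x" "lam * x \<le> lam * c"
      using that lam_pos by auto
    then show ?thesis
      using fext_left[OF that] lam_c f_0 by simp
  qed
  then show ?thesis
    unfolding closure_Xp_1 by blast
qed

lemma fext_2_image: "fext f 2 cs 2 ` closure (Xp 2 cs 2) \<subseteq> {0..f 1}"
proof -
  have "fext f 2 cs 2 x \<in> {0..f 1}" if "x \<in> {c..1}" for x
  proof -
    have "lam * c \<le> lam * x" "lam * x \<le> lam"
      using that lam_pos by auto
    then show ?thesis
      using fext_right[OF that] lam_c f_1 by simp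
  qed
  then show ?thesis
    unfolding closure_Xp_2 by blast
qed

lemma P2_holds: "P2 f 2 cs"
proof -
  have index: "i = 1 \<or> i = 2" if "i \<in> {1..2}" for i :: nat
    using that by auto
  have "{f 0..1} \<inter> {0..f 1} = {}"
    using f_1_less_f_0 by auto
  then have disjoint_12: "fext f 2 cs 1 ` closure (Xp 2 cs 1) \<inter> fext f 2 cs 2 ` closure (Xp 2 cs 2) = {}"
    and disjoint_21: "fext f 2 cs 2 ` closure (Xp 2 cs 2) \<inter> fext f 2 cs 1 ` closure (Xp 2 cs 1) = {}"
    using fext_1_image fext_2_image by blast+
  show ?thesis
    unfolding P2_def
  proof (intro conjI ballI impI)
    fix i :: nat assume "i \<in> {1..2}"
    then show "inj_on (fext f 2 cs i) (closure (Xp 2 cs i))"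
      using index inj_on_fext_1 inj_on_fext_2 by blast
  next
    fix i j :: nat assume "i \<in> {1..2}" "j \<in> {1..2}" "i \<noteq> j"
    then show "fext f 2 cs i ` closure (Xp 2 cs i) \<inter> fext f 2 cs j ` closure (Xp 2 cs j) = {}"
      using index disjoint_12 disjoint_21 by blast
  qed
qed

lemma fext_at_c: "fext f 2 cs 1 c = 1" "fext f 2 cs 2 c = 0"
  using fext_left[of c] fext_right[of c] c_pos c_less_1 lam_c by auto

lemma mem_Xtilde: "x \<in> Xtilde f 2 cs \<longleftrightarrow> (\<forall>t. (f ^^ t) x \<in> {0..1} - {c})"
proof
  assume "\<forall>t. (f ^^ t) x \<in> {0..1} - {c}"
  moreover have "x \<in> {0..1}"
    using calculation[rule_format, of 0] by simp
  ultimately show "x \<in> Xtilde f 2 cs"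
    by (auto simp: Xtilde_def XX_def Delta_def)
qed (auto simp: Xtilde_def XX_def Delta_def)

lemma orbit_of_1: "(f ^^ Suc k) 1 = lo k" and orbit_of_0: "(f ^^ Suc k) 0 = hi k"
  by (simp_all add: lo_def hi_def)

lemma P4_holds: "P4 f 2 cs"
proof -
  have "(f ^^ t) 1 \<in> {0..1} - {c} \<and> (f ^^ t) 0 \<in> {0..1} - {c}" for t
  proof (cases t)
    case 0
    then show ?thesis
      using c_pos c_less_1 by simp
  next
    case (Suc k)
    then show ?thesis
      using gap_endpoints_in_domain[of k] by (simp only: orbit_of_1 orbit_of_0)
  qed
  then have "{1, 0} \<subseteq> Xtilde f 2 cs"
    by (simp add: mem_Xtilde)
  moreover have "(\<Union>i\<in>{1..2 - 1}. {fext f 2 cs i (cs i), fext f 2 cs (Suc i) (cs i)}) = {1, 0}"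
    using fext_at_c by (simp add: numeral_2_eq_2[symmetric])
  ultimately show ?thesis
    unfolding P4_def by simp
qed

lemma P5_holds: "P5 f 2 cs"
proof -
  have "range lo \<subseteq> range (\<lambda>n. (f ^^ n) 1)"
    unfolding image_subset_iff using orbit_of_1 by (metis rangeI)
  then have "attractor f 2 cs \<subseteq> closure (range (\<lambda>n. (f ^^ n) (fext f 2 cs 1 (cs 1))))"
    using gap_complement_subset_closure_left_endpoints closure_mono fext_at_c
    by (simp add: attractor_eq_gap_complement) blast
  then show ?thesis
    unfolding P5_def by auto
qed

lemma c_notin_gaps: "c \<notin> {lo k..hi k}"
  using gap_subset[of k] by blast

lemma c_in_gap_complement: "c \<in> gap_complement"
proof -
  have "c \<notin> {lo k<..<hi k}" for k
    using c_notin_gaps[of k] by auto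
  then show ?thesis
    using c_pos c_less_1 by (simp add: mem_gap_complement)
qed

lemma ball_subset_atom:
  assumes "y \<in> {0<..<1}" "\<forall>k. y \<notin> {lo k..hi k}"
  shows "\<exists>w r. length w = n \<and> set w \<subseteq> {1..2} \<and> 0 < r \<and> ball y r \<subseteq> atom f 2 cs w"
  using assms
proof (induction n arbitrary: y)
  case 0
  then show ?case
    by (intro exI[of _ "[]"] exI[of _ "min y (1 - y)"]) (auto simp: atom_Nil dist_real_def)
next
  case (Suc n)
  have "y \<notin> {lo 0<..<hi 0}"
    using Suc.prems(2)[rule_format, of 0] by auto
  then obtain x where x: "x \<in> {0..1} - {c}" "f x = y"
    using Suc.prems(1) f_onto_outside_first_gap by blast
  have x_off_gaps: "x \<notin> {lo k..hi k}" for k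
    using gap_image[of k] Suc.prems(2) x(2) by blast
  moreover have "x \<noteq> 0" "x \<noteq> 1"
    using Suc.prems(2)[rule_format, of 0] x(2) lo_less_hi[of 0] by (auto simp: lo_0 hi_0)
  ultimately obtain w r where w: "length w = n" "set w \<subseteq> {1..2}" "0 < r"
    "ball x r \<subseteq> atom f 2 cs w"
    using Suc.IH[of x] x(1) by auto
  define i :: nat where "i = (if x < c then 1 else 2)"
  define \<beta> where "\<beta> = (if x < c then mu else mu - 1)"
  define r' where "r' = min r \<bar>x - c\<bar>"
  have "0 < r'"
    using w(3) x(1) by (auto simp: r'_def)
  have piece: "ball x r' \<subseteq> atom f 2 cs w \<inter> Xp 2 cs i"
  proof
    fix z assume z: "z \<in> ball x r'"
    then have "z \<in> atom f 2 cs w"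
      using w(4) by (auto simp: r'_def)
    then have "z \<in> {0..1}"
      using atom_subset by blast
    moreover have "z \<noteq> c" "z < c \<longleftrightarrow> x < c"
      using z by (auto simp: r'_def dist_real_def abs_if split: if_splits)
    ultimately show "z \<in> atom f 2 cs w \<inter> Xp 2 cs i"
      using \<open>z \<in> atom f 2 cs w\<close> by (auto simp: i_def Xp_def)
  qed
  have "f z = lam * z + \<beta>" if "z \<in> ball x r'" for z
    using piece that f_left f_right by (auto simp: i_def \<beta>_def Xp_def split: if_splits)
  then have "ball y (lam * r') \<subseteq> f ` ball x r'"
    using ball_subset_image_affine[OF lam_pos] x(2) by blast
  also have "\<dots> \<subseteq> atom f 2 cs (w @ [i])"
    unfolding atom_snoc using piece closure_subset by blast
  finally show ?case
    using w \<open>0 < r'\<close> lam_pos by (intro exI[of _ "w @ [i]"] exI[of _ "lam * r'"]) (auto simp: i_def)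
qed

lemma shadow_step:
  assumes y: "y \<in> {0..1} - {c}" and u: "u \<in> {0..1}" "y \<le> u" "u < y + d"
    and far: "\<not> (c - d < y \<and> y < c)"
  shows "u \<noteq> c \<and> f y \<le> f u \<and> f u < f y + d"
proof -
  have "lam * (u - y) \<le> u - y" "0 \<le> lam * (u - y)"
    using lam_pos lam_less_1 u by (auto intro: mult_left_le_one_le)
  moreover have "(y < c \<and> u < c) \<or> (c < y \<and> c < u)"
    using y u far by auto
  moreover have "f u - f y = lam * (u - y)"
    using calculation(3)
  proof
    assume "y < c \<and> u < c"
    then show ?thesis
      using y u f_left[of y] f_left[of u] by (simp add: algebra_simps)
  next
    assume "c < y \<and> c < u"
    then show ?thesis
      using y u f_right[of y] f_right[of u] by (simp add: algebra_simps)
  qed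
  ultimately show ?thesis
    using u by auto
qed

lemma orbit_approaches_c_from_left:
  assumes orbit: "\<And>t. (f ^^ t) x \<in> {0..1} - {c}" and "0 < \<epsilon>"
  shows "\<exists>t\<ge>T. c - \<epsilon> < (f ^^ t) x \<and> (f ^^ t) x < c"
proof (rule ccontr)
  assume "\<not> ?thesis"
  then have avoid: "\<not> (c - \<epsilon> < (f ^^ t) x \<and> (f ^^ t) x < c)" if "t \<ge> T" for t
    using that by blast
  define d where "d = \<epsilon> / 2"
  have d: "0 < d" "d < \<epsilon>"
    using \<open>0 < \<epsilon>\<close> by (auto simp: d_def)
  define y where "y t = (f ^^ t) x" for t
  have y_Suc: "y (Suc t) = f (y t)" for t
    by (simp add: y_def)
  have "y (Suc T) \<in> {0<..<1}"
    using f_in_unit_interval[OF orbit[of T]] by (simp add: y_def)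
  then obtain k0 where "{y (Suc T)<..<min (y (Suc T) + d) 1} \<inter> {lo k0<..<hi k0} \<noteq> {}"
    using gaps_dense[of "y (Suc T)" "min (y (Suc T) + d) 1"] d by auto
  then obtain z where "z \<in> {y (Suc T)<..<min (y (Suc T) + d) 1}" "z \<in> {lo k0<..<hi k0}"
    by blast
  then have z: "z \<in> {lo k0<..<hi k0}" "y (Suc T) \<le> z" "z < y (Suc T) + d"
    by auto
  \<comment> \<open>The orbit drags \<open>z\<close> along through successive gaps; these accumulate at \<open>c\<close> from the left.\<close>
  have shadow: "(f ^^ j) z \<in> {lo (k0 + j)<..<hi (k0 + j)} \<and>
      y (Suc T + j) \<le> (f ^^ j) z \<and> (f ^^ j) z < y (Suc T + j) + d" for j
  proof (induction j)
    case (Suc j)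
    define u where "u = (f ^^ j) z"
    have IH: "u \<in> {lo (k0 + j)<..<hi (k0 + j)}" "y (Suc T + j) \<le> u" "u < y (Suc T + j) + d"
      using Suc.IH unfolding u_def by auto
    have "u \<in> {0..1}"
      using IH(1) lo_pos[of "k0 + j"] hi_less_1[of "k0 + j"] by auto
    moreover have "y (Suc T + j) \<in> {0..1} - {c}"
      unfolding y_def by (rule orbit)
    moreover have "\<not> (c - d < y (Suc T + j) \<and> y (Suc T + j) < c)"
      using avoid[of "Suc T + j"] d by (auto simp: y_def)
    ultimately have "u \<noteq> c" "y (Suc (Suc T + j)) \<le> f u" "f u < y (Suc (Suc T + j)) + d"
      using shadow_step[of "y (Suc T + j)" u d] IH by (simp_all add: y_Suc)
    moreover have "f u \<in> {lo (Suc (k0 + j))<..<hi (Suc (k0 + j))}"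
      using gap_step[of u] IH(1) \<open>u \<in> {0..1}\<close> \<open>u \<noteq> c\<close> by simp
    ultimately show ?case
      by (simp add: u_def)
  qed (use z in simp)
  have "c \<noteq> hi k" for k
    using c_notin_gaps[of k] lo_less_hi[of k] by auto
  then obtain k where k: "k \<ge> k0" "c - d < lo k" "hi k < c"
    using gaps_accumulate_from_left[OF c_in_gap_complement c_pos _ d(1), of k0] by blast
  then have "c - \<epsilon> < y (Suc T + (k - k0))" "y (Suc T + (k - k0)) < c"
    using shadow[of "k - k0"] d by (auto simp: d_def)
  then show False
    using avoid[of "Suc T + (k - k0)"] by (simp add: y_def)
qed

lemma mirror: "contracted_rotation lam (2 - lam - mu) (1 - c) (\<lambda>x. 1 - f (1 - x))"
proof
  show "0 < 2 - lam - mu" "2 - lam - mu < 1" "1 < lam + (2 - lam - mu)"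
    using lam_less_1 mu_less_1 lam_mu by auto
  show "1 - c = (1 - (2 - lam - mu)) / lam"
    using lam_pos by (simp add: c_eq field_simps)
  show "1 - f (1 - x) = lam * x + (2 - lam - mu)" if "0 \<le> x" "x < 1 - c" for x
    using f_right[of "1 - x"] that by (simp add: algebra_simps)
  show "1 - f (1 - x) = lam * x + (2 - lam - mu) - 1" if "1 - c < x" "x \<le> 1" for x
    using f_left[of "1 - x"] that by (simp add: algebra_simps)
  show "1 - c \<notin> ((\<lambda>x. 1 - f (1 - x)) ^^ k) ` {1 - f (1 - 1)..1 - f (1 - 0)}" for k
  proof -
    have "{1 - f (1 - 1)..1 - f (1 - 0)} = (\<lambda>x. 1 - x) ` {f 1..f 0}"
      by simp
    then show ?thesis
      using c_not_in_gap_images[of k] by (auto simp: funpow_reflect image_image)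
  qed
qed (use lam_pos lam_less_1 in auto)

lemma orbit_approaches_c_from_right:
  assumes orbit: "\<And>t. (f ^^ t) x \<in> {0..1} - {c}" and "0 < \<epsilon>"
  shows "\<exists>t\<ge>T. c < (f ^^ t) x \<and> (f ^^ t) x < c + \<epsilon>"
proof -
  interpret mirror: contracted_rotation lam "2 - lam - mu" "1 - c" "\<lambda>x. 1 - f (1 - x)"
    by (rule mirror)
  have "((\<lambda>x. 1 - f (1 - x)) ^^ t) (1 - x) \<in> {0..1} - {1 - c}" for t
    using orbit[of t] by (auto simp: funpow_reflect)
  then obtain t where "t \<ge> T" "1 - c - \<epsilon> < 1 - (f ^^ t) x" "1 - (f ^^ t) x < 1 - c"
    using mirror.orbit_approaches_c_from_left[of "1 - x" \<epsilon> T] \<open>0 < \<epsilon>\<close>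
    by (auto simp: funpow_reflect)
  then show ?thesis
    by (intro exI[of _ t]) auto
qed

lemma P6_holds: "P6 f 2 cs"
  unfolding P6_def
proof (intro ballI)
  fix x and i :: nat assume x: "x \<in> Xtilde f 2 cs" and i: "i \<in> {1..2 - 1}"
  have orbit: "(f ^^ t) x \<in> {0..1} - {c}" for t
    using x by (simp add: mem_Xtilde)
  have "\<exists>A\<in>atoms_of f 2 cs n x. c \<in> A \<and> (\<exists>t. (f ^^ (t + n)) x \<in> A \<inter> {0..<c}) \<and>
      (\<exists>t'. (f ^^ (t' + n)) x \<in> A \<inter> {c<..1})" for n
  proof -
    obtain w r where w: "length w = n" "set w \<subseteq> {1..2}" "0 < r" "ball c r \<subseteq> atom f 2 cs w"
      using ball_subset_atom[of c n] c_pos c_less_1 c_notin_gaps by auto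
    define A where "A = atom f 2 cs w"
    have "c \<in> A"
      using w(3,4) by (auto simp: A_def)
    obtain t where t: "t \<ge> n" "c - r < (f ^^ t) x" "(f ^^ t) x < c"
      using orbit_approaches_c_from_left[OF orbit w(3)] by blast
    obtain t' where t': "t' \<ge> n" "c < (f ^^ t') x" "(f ^^ t') x < c + r"
      using orbit_approaches_c_from_right[OF orbit w(3)] by blast
    have "(f ^^ ((t - n) + n)) x \<in> A \<inter> {0..<c}"
      using t orbit[of t] w(4) by (auto simp: A_def dist_real_def)
    moreover have "(f ^^ ((t' - n) + n)) x \<in> A \<inter> {c<..1}"
      using t' orbit[of t'] w(4) by (auto simp: A_def dist_real_def)
    moreover have "A \<in> atoms_of f 2 cs n x"
      using w(1,2) \<open>c \<in> A\<close> calculation(1) unfolding atoms_of_def atoms_def A_def by blast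
    ultimately show ?thesis
      using \<open>c \<in> A\<close> by blast
  qed
  then have "c \<in> Delta_lr f 2 cs x"
    unfolding Delta_lr_def by (intro CollectI exI[of _ 1]) (simp add: Xp_def)
  then show "cs i \<in> Delta_lr f 2 cs x"
    using i by simp
qed

end

theorem proposition1:
  fixes lam mu c :: real and f :: "real \<Rightarrow> real"
  assumes "0 < lam" "lam < 1" "0 < mu" "mu < 1" "lam + mu > 1"
    and "c = (1 - mu) / lam"
    and "f ` {0..1} \<subseteq> {0..1}"
    and "\<forall>x\<in>{0..<c}. f x = lam * x + mu"
    and "\<forall>x\<in>{c<..1}. f x = lam * x + mu - 1"
    and "\<forall>k::nat. c \<notin> (f ^^ k) ` {f 1 .. f 0}"
  shows "let cs = (\<lambda>i::nat. if i = 0 then 0 else if i = 1 then c else (1::real))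
         in P1 f 2 cs \<and> P2 f 2 cs \<and> P3 f 2 cs \<and> P4 f 2 cs \<and> P5 f 2 cs \<and> P6 f 2 cs"
proof -
  interpret contracted_rotation lam mu c f
    using assms by unfold_locales auto
  have "P3 f 2 cs"
    unfolding P3_def attractor_eq_gap_complement by (rule cantor_set_gap_complement)
  then show ?thesis
    unfolding Let_def using P1_holds P2_holds P4_holds P5_holds P6_holds by blast
qed

end
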